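(* Let $\mathcal{K}$ be a finite-dimensional complex Hilbert space and $\mathcal{E}$ a completely positive trace-preserving map on the operators of $\mathcal{K}$ admitting a Kraus (operator-sum) representation $\mathcal{E}(\rho)=\sum_{i}V_i\rho V_i^\dagger$ in which one term is $V_1=\sqrt{\alpha}\,I$ with $\alpha>0$. Then, viewing $\mathcal{E}$ as a linear map on the space of operators on $\mathcal{K}$, the only eigenvalue of $\mathcal{E}$ of modulus one can be $1$. *)

theory Defs
  imports "Jordan_Normal_Form.Schur_Decomposition"
begin

definition kraus_map :: "nat \<Rightarrow> complex mat list \<Rightarrow> complex mat \<Rightarrow> complex mat" where
  "kraus_map n Vs \<rho> = foldr (\<lambda>V acc. V * \<rho> * mat_adjoint V + acc) Vs (0\<^sub>m n n)"

definition mat_trace :: "complex mat \<Rightarrow> complex" where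
  "mat_trace A = (\<Sum>i<dim_row A. A $$ (i, i))"

definition trace_preserving :: "nat \<Rightarrow> (complex mat \<Rightarrow> complex mat) \<Rightarrow> bool" where
  "trace_preserving n E \<longleftrightarrow> (\<forall>\<rho> \<in> carrier_mat n n. mat_trace (E \<rho>) = mat_trace \<rho>)"

definition superop_eigenvalue :: "nat \<Rightarrow> (complex mat \<Rightarrow> complex mat) \<Rightarrow> complex \<Rightarrow> bool" where
  "superop_eigenvalue n E \<mu> \<longleftrightarrow>
     (\<exists>\<rho> \<in> carrier_mat n n. \<rho> \<noteq> 0\<^sub>m n n \<and> E \<rho> = \<mu> \<cdot>\<^sub>m \<rho>)"

end

theory Submission
  imports Defs "HOL-Analysis.L2_Norm"
begin

text \<open>Splitting off the Kraus operator \<open>\<surd>\<alpha> I\<close> writes the channel as \<open>\<alpha> id + F\<close> with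
  \<open>F \<rho> = \<Sum> W \<rho> W\<^sup>\<dagger>\<close>, and trace preservation says \<open>\<Sum> \<parallel>W z\<parallel>\<^sup>2 = (1 - \<alpha>) \<parallel>z\<parallel>\<^sup>2\<close>.
  Measure \<open>\<rho>\<close> by its trace norm, the least \<open>\<Sum> \<parallel>x\<^sub>k\<parallel> \<parallel>y\<^sub>k\<parallel>\<close> over decompositions
  \<open>\<rho> = \<Sum> x\<^sub>k y\<^sub>k\<^sup>\<dagger>\<close>. \<open>F\<close> sends each dyad \<open>x y\<^sup>\<dagger>\<close> to the dyads \<open>(W x) (W y)\<^sup>\<dagger>\<close>, whose cost
  is at most \<open>|1 - \<alpha>| \<parallel>x\<parallel> \<parallel>y\<parallel>\<close> by Cauchy-Schwarz, so \<open>F\<close> scales the trace norm by at most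
  \<open>|1 - \<alpha>|\<close>. An eigenvalue \<open>\<mu>\<close> of the channel is an eigenvalue \<open>\<mu> - \<alpha>\<close> of \<open>F\<close>, hence
  \<open>|\<mu> - \<alpha>| \<le> |1 - \<alpha>|\<close>, and this disc meets the unit circle only at \<open>1\<close>.\<close>

lemma index_mat_adjoint [simp]:
  "i < dim_col V \<Longrightarrow> j < dim_row V \<Longrightarrow> mat_adjoint V $$ (i, j) = cnj (V $$ (j, i))"
  "dim_row (mat_adjoint V) = dim_col V" "dim_col (mat_adjoint V) = dim_row V"
  unfolding mat_adjoint_def by (auto simp: mat_of_rows_def)

lemma mat_adjoint_carrier [simp]:
  fixes V :: "complex mat"
  assumes "V \<in> carrier_mat n m"
  shows "mat_adjoint V \<in> carrier_mat m n"
  using carrier_matD[OF assms] by (intro carrier_matI) simp_all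

text \<open>Vectors of \<open>\<complex>\<^sup>n\<close> are functions \<open>nat \<Rightarrow> complex\<close> of which only the values below \<open>n\<close>
  matter.\<close>
definition mat_apply :: "complex mat \<Rightarrow> (nat \<Rightarrow> complex) \<Rightarrow> nat \<Rightarrow> complex" where
  "mat_apply V x a = (\<Sum>c<dim_col V. V $$ (a, c) * x c)"

abbreviation map_dyads :: "complex mat \<Rightarrow> ((nat \<Rightarrow> complex) \<times> (nat \<Rightarrow> complex)) list
    \<Rightarrow> ((nat \<Rightarrow> complex) \<times> (nat \<Rightarrow> complex)) list" where
  "map_dyads V ps \<equiv> map (\<lambda>(x, y). (mat_apply V x, mat_apply V y)) ps"

definition vec_norm :: "nat \<Rightarrow> (nat \<Rightarrow> complex) \<Rightarrow> real" where
  "vec_norm n x = L2_set (\<lambda>a. cmod (x a)) {..<n}"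

definition dyads :: "nat \<Rightarrow> ((nat \<Rightarrow> complex) \<times> (nat \<Rightarrow> complex)) list \<Rightarrow> complex mat" where
  "dyads n ps = mat n n (\<lambda>(a, b). \<Sum>(x, y)\<leftarrow>ps. x a * cnj (y b))"

definition dyads_cost :: "nat \<Rightarrow> ((nat \<Rightarrow> complex) \<times> (nat \<Rightarrow> complex)) list \<Rightarrow> real" where
  "dyads_cost n ps = (\<Sum>(x, y)\<leftarrow>ps. vec_norm n x * vec_norm n y)"

text \<open>This variational form of the trace norm equals the sum of the singular values of
  \<open>\<rho>\<close>, but only the infimum is ever used.\<close>
definition trace_norm :: "nat \<Rightarrow> complex mat \<Rightarrow> real" where
  "trace_norm n \<rho> = Inf {dyads_cost n ps | ps. dyads n ps = \<rho>}"

lemma vec_norm_nonneg [simp]: "0 \<le> vec_norm n x"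
  by (simp add: vec_norm_def)

lemma vec_norm_power2: "(vec_norm n x)\<^sup>2 = (\<Sum>a<n. (cmod (x a))\<^sup>2)"
  by (simp add: vec_norm_def L2_set_def sum_nonneg)

lemma norm_le_vec_norm: "a < n \<Longrightarrow> cmod (x a) \<le> vec_norm n x"
  unfolding vec_norm_def by (rule member_le_L2_set) auto

lemma vec_norm_divide: "vec_norm n (\<lambda>a. x a / c) = vec_norm n x / cmod c"
proof -
  have "vec_norm n (\<lambda>a. x a / c) = vec_norm n x * inverse (cmod c)"
    unfolding vec_norm_def by (simp add: L2_set_left_distrib divide_inverse norm_mult norm_inverse)
  then show ?thesis by (simp add: divide_inverse)
qed

lemma dyads_carrier [simp]: "dyads n ps \<in> carrier_mat n n"
  and dim_row_dyads [simp]: "dim_row (dyads n ps) = n"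
  and dim_col_dyads [simp]: "dim_col (dyads n ps) = n"
  by (simp_all add: dyads_def)

lemma index_dyads:
  "a < n \<Longrightarrow> b < n \<Longrightarrow> dyads n ps $$ (a, b) = (\<Sum>(x, y)\<leftarrow>ps. x a * cnj (y b))"
  by (simp add: dyads_def)

lemma dyads_Nil: "dyads n [] = 0\<^sub>m n n"
  by (rule eq_matI) (auto simp: index_dyads)

lemma dyads_append: "dyads n (ps @ qs) = dyads n ps + dyads n qs"
  by (rule eq_matI) (auto simp: index_dyads)

lemma dyads_cost_nonneg: "0 \<le> dyads_cost n ps"
  unfolding dyads_cost_def by (rule sum_list_nonneg) auto

lemma dyads_columns:
  assumes "\<rho> \<in> carrier_mat n n"
  shows "dyads n (map (\<lambda>c. (\<lambda>a. \<rho> $$ (a, c), \<lambda>b. if b = c then 1 else 0)) [0..<n]) = \<rho>"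
proof (rule eq_matI)
  fix a b assume "a < dim_row \<rho>" "b < dim_col \<rho>"
  then have ab: "a < n" "b < n" using assms by auto
  have "dyads n (map (\<lambda>c. (\<lambda>a. \<rho> $$ (a, c), \<lambda>b. if b = c then 1 else 0)) [0..<n]) $$ (a, b)
      = (\<Sum>c\<leftarrow>[0..<n]. \<rho> $$ (a, c) * cnj (if b = c then 1 else 0))"
    using ab by (simp add: index_dyads o_def)
  also have "\<dots> = (\<Sum>c\<in>{0..<n}. \<rho> $$ (a, c) * cnj (if b = c then 1 else 0))"
    by (simp add: interv_sum_list_conv_sum_set_nat)
  also have "\<dots> = (\<Sum>c\<in>{0..<n}. if c = b then \<rho> $$ (a, c) else 0)"
    by (rule sum.cong) auto
  also have "\<dots> = \<rho> $$ (a, b)"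
    using ab by simp
  finally show "dyads n (map (\<lambda>c. (\<lambda>a. \<rho> $$ (a, c), \<lambda>b. if b = c then 1 else 0)) [0..<n]) $$ (a, b)
      = \<rho> $$ (a, b)" .
qed (use assms in \<open>simp_all add: carrier_matD\<close>)

lemma norm_index_dyads_le:
  assumes "a < n" "b < n"
  shows "cmod (dyads n ps $$ (a, b)) \<le> dyads_cost n ps"
proof (induction ps)
  case (Cons p ps)
  obtain x y where p: "p = (x, y)" by fastforce
  have "cmod (dyads n (p # ps) $$ (a, b)) \<le> cmod (x a * cnj (y b)) + cmod (dyads n ps $$ (a, b))"
    using assms by (simp add: p index_dyads norm_triangle_ineq)
  also have "\<dots> \<le> vec_norm n x * vec_norm n y + dyads_cost n ps"
    by (intro add_mono Cons.IH) (auto simp: norm_mult intro!: mult_mono norm_le_vec_norm assms)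
  finally show ?case by (simp add: p dyads_cost_def)
qed (simp add: assms index_dyads dyads_cost_def)

lemma dyads_divide:
  "dyads n (map (\<lambda>(x, y). (\<lambda>a. x a / c, y)) ps) = inverse c \<cdot>\<^sub>m dyads n ps"
proof -
  have "(\<Sum>(x, y)\<leftarrow>ps. x a / c * cnj (y b)) = inverse c * (\<Sum>(x, y)\<leftarrow>ps. x a * cnj (y b))" for a b
    by (induction ps) (auto simp: divide_inverse algebra_simps)
  then show ?thesis by (intro eq_matI) (simp_all add: index_dyads o_def prod.case_distrib)
qed

lemma dyads_cost_divide:
  "dyads_cost n (map (\<lambda>(x, y). (\<lambda>a. x a / c, y)) ps) = dyads_cost n ps / cmod c"
  by (induction ps) (auto simp: dyads_cost_def vec_norm_divide add_divide_distrib)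

lemma trace_norm_le_dyads_cost: "trace_norm n (dyads n ps) \<le> dyads_cost n ps"
  unfolding trace_norm_def
  by (rule cInf_lower) (auto intro: bdd_belowI[where m = 0] dyads_cost_nonneg)

lemma trace_norm_greatest:
  assumes "\<rho> \<in> carrier_mat n n" "\<And>ps. dyads n ps = \<rho> \<Longrightarrow> r \<le> dyads_cost n ps"
  shows "r \<le> trace_norm n \<rho>"
  unfolding trace_norm_def using dyads_columns[OF assms(1)] assms(2)
  by (intro cInf_greatest) blast+

lemma trace_norm_nonneg: "\<rho> \<in> carrier_mat n n \<Longrightarrow> 0 \<le> trace_norm n \<rho>"
  by (rule trace_norm_greatest) (simp_all add: dyads_cost_nonneg)

lemma norm_index_le_trace_norm:
  assumes "\<rho> \<in> carrier_mat n n" "a < n" "b < n"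
  shows "cmod (\<rho> $$ (a, b)) \<le> trace_norm n \<rho>"
  using assms norm_index_dyads_le by (intro trace_norm_greatest) blast+

lemma trace_norm_pos:
  assumes "\<rho> \<in> carrier_mat n n" "\<rho> \<noteq> 0\<^sub>m n n"
  shows "0 < trace_norm n \<rho>"
proof -
  obtain a b where ab: "a < n" "b < n" "\<rho> $$ (a, b) \<noteq> 0"
    using assms by (metis carrier_matD eq_matI index_zero_mat(1-3))
  then show ?thesis
    using norm_index_le_trace_norm[OF assms(1) ab(1,2)] by (meson less_le_trans zero_less_norm_iff)
qed

lemma cmod_mult_trace_norm_le:
  assumes "\<rho> \<in> carrier_mat n n"
  shows "cmod c * trace_norm n \<rho> \<le> trace_norm n (c \<cdot>\<^sub>m \<rho>)"
proof (cases "c = 0")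
  case True
  with assms show ?thesis by (simp add: trace_norm_nonneg)
next
  case False
  show ?thesis
  proof (rule trace_norm_greatest)
    fix ps assume ps: "dyads n ps = c \<cdot>\<^sub>m \<rho>"
    let ?qs = "map (\<lambda>(x, y). (\<lambda>a. x a / c, y)) ps"
    have "dyads n ?qs = \<rho>"
      unfolding dyads_divide ps using False assms by (intro eq_matI) auto
    then have "trace_norm n \<rho> \<le> dyads_cost n ps / cmod c"
      using trace_norm_le_dyads_cost[of n ?qs] by (simp add: dyads_cost_divide)
    with False show "cmod c * trace_norm n \<rho> \<le> dyads_cost n ps"
      by (simp add: field_simps)
  qed (use assms in simp)
qed

lemma sandwich_dyad:
  assumes V: "V \<in> carrier_mat n n"
  shows "V * dyads n [(x, y)] * mat_adjoint V = dyads n [(mat_apply V x, mat_apply V y)]"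
proof (rule eq_matI)
  fix a b assume "a < dim_row (dyads n [(mat_apply V x, mat_apply V y)])"
    "b < dim_col (dyads n [(mat_apply V x, mat_apply V y)])"
  then have ab: "a < n" "b < n" by simp_all
  have "(V * dyads n [(x, y)] * mat_adjoint V) $$ (a, b)
      = (\<Sum>d<n. (V * dyads n [(x, y)]) $$ (a, d) * cnj (V $$ (b, d)))"
    using V ab by (simp add: index_mult_mat scalar_prod_def lessThan_atLeast0)
  also have "\<dots> = (\<Sum>d<n. \<Sum>c<n. V $$ (a, c) * x c * cnj (V $$ (b, d) * y d))"
    using V ab by (intro sum.cong refl)
      (simp add: index_mult_mat scalar_prod_def lessThan_atLeast0 sum_distrib_left sum_distrib_right
        index_dyads mult_ac)
  also have "\<dots> = (\<Sum>c<n. \<Sum>d<n. V $$ (a, c) * x c * cnj (V $$ (b, d) * y d))"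
    by (rule sum.swap)
  also have "\<dots> = dyads n [(mat_apply V x, mat_apply V y)] $$ (a, b)"
    using V ab by (simp add: index_dyads mat_apply_def cnj_sum sum_product)
  finally show "(V * dyads n [(x, y)] * mat_adjoint V) $$ (a, b)
      = dyads n [(mat_apply V x, mat_apply V y)] $$ (a, b)" .
qed (use V in simp_all)

lemma dyads_Cons: "dyads n (p # ps) = dyads n [p] + dyads n ps"
  using dyads_append[of n "[p]" ps] by simp

lemma sandwich_dyads:
  assumes V: "V \<in> carrier_mat n n"
  shows "V * dyads n ps * mat_adjoint V = dyads n (map_dyads V ps)"
proof (induction ps)
  case Nil
  show ?case
    by (simp add: dyads_Nil right_mult_zero_mat[OF V]
        left_mult_zero_mat[OF mat_adjoint_carrier[OF V]])
next
  case (Cons p ps)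
  obtain x y where p: "p = (x, y)" by fastforce
  have "V * dyads n ((x, y) # ps) * mat_adjoint V
      = V * (dyads n [(x, y)] + dyads n ps) * mat_adjoint V"
    unfolding dyads_Cons[of n "(x, y)" ps] ..
  also have "\<dots> = V * dyads n [(x, y)] * mat_adjoint V + V * dyads n ps * mat_adjoint V"
    unfolding mult_add_distrib_mat[OF V dyads_carrier dyads_carrier]
    by (rule add_mult_distrib_mat[OF mult_carrier_mat[OF V dyads_carrier]
          mult_carrier_mat[OF V dyads_carrier] mat_adjoint_carrier[OF V]])
  also have "\<dots> = dyads n [(mat_apply V x, mat_apply V y)] + dyads n (map_dyads V ps)"
    by (simp only: sandwich_dyad[OF V] Cons.IH)
  also have "\<dots> = dyads n (map_dyads V ((x, y) # ps))"
    unfolding list.map prod.case dyads_Cons[of n _ "map _ ps"] ..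
  finally show ?case by (simp only: p)
qed

lemma kraus_map_dyads:
  assumes "\<forall>V \<in> set Vs. V \<in> carrier_mat n n"
  shows "kraus_map n Vs (dyads n ps)
    = dyads n (concat (map (\<lambda>V. map_dyads V ps) Vs))"
  using assms
proof (induction Vs)
  case Nil
  show ?case by (simp add: kraus_map_def dyads_Nil)
next
  case (Cons V Vs)
  then show ?case by (simp add: kraus_map_def sandwich_dyads dyads_append)
qed

lemma kraus_map_carrier:
  assumes "\<forall>V \<in> set Vs. V \<in> carrier_mat n n" "\<rho> \<in> carrier_mat n n"
  shows "kraus_map n Vs \<rho> \<in> carrier_mat n n"
  using assms(1) by (induction Vs) (auto simp: kraus_map_def mult_carrier_mat[of _ n n] assms(2))

lemma mat_trace_dyads: "mat_trace (dyads n ps) = (\<Sum>(x, y)\<leftarrow>ps. \<Sum>a<n. x a * cnj (y a))"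
proof -
  have "mat_trace (dyads n ps) = (\<Sum>a<n. \<Sum>(x, y)\<leftarrow>ps. x a * cnj (y a))"
    unfolding mat_trace_def by (simp add: index_dyads)
  also have "\<dots> = (\<Sum>(x, y)\<leftarrow>ps. \<Sum>a<n. x a * cnj (y a))"
    by (induction ps) (auto simp: sum.distrib)
  finally show ?thesis .
qed

lemma sum_mult_cnj_eq_vec_norm: "(\<Sum>a<n. x a * cnj (x a)) = of_real ((vec_norm n x)\<^sup>2)"
  unfolding vec_norm_power2 of_real_sum complex_norm_square ..

lemma kraus_sum_vec_norm_power2:
  assumes "\<forall>V \<in> set Vs. V \<in> carrier_mat n n" "trace_preserving n (kraus_map n Vs)"
  shows "(\<Sum>V\<leftarrow>Vs. (vec_norm n (mat_apply V x))\<^sup>2) = (vec_norm n x)\<^sup>2"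
proof -
  have "kraus_map n Vs (dyads n [(x, x)]) = dyads n (map (\<lambda>V. (mat_apply V x, mat_apply V x)) Vs)"
    using assms(1) by (simp add: kraus_map_dyads)
  then have "of_real (\<Sum>V\<leftarrow>Vs. (vec_norm n (mat_apply V x))\<^sup>2)
      = mat_trace (kraus_map n Vs (dyads n [(x, x)]))"
    by (simp add: mat_trace_dyads sum_mult_cnj_eq_vec_norm o_def flip: sum_list_of_real)
  also have "\<dots> = mat_trace (dyads n [(x, x)])"
    using assms(2) by (simp add: trace_preserving_def)
  also have "\<dots> = of_real ((vec_norm n x)\<^sup>2)"
    by (simp add: mat_trace_dyads sum_mult_cnj_eq_vec_norm)
  finally show ?thesis by (simp only: of_real_eq_iff)
qed

lemma kraus_vec_norm_mult_le:
  assumes "\<And>z. (\<Sum>W\<leftarrow>Ws. (vec_norm n (mat_apply W z))\<^sup>2) = \<beta> * (vec_norm n z)\<^sup>2"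
  shows "(\<Sum>W\<leftarrow>Ws. vec_norm n (mat_apply W x) * vec_norm n (mat_apply W y))
    \<le> \<bar>\<beta>\<bar> * vec_norm n x * vec_norm n y"
proof -
  have L2: "L2_set (\<lambda>i. vec_norm n (mat_apply (Ws ! i) z)) {..<length Ws}
      = sqrt (\<beta> * (vec_norm n z)\<^sup>2)"
    for z using assms[of z] by (simp add: L2_set_def sum_list_sum_nth atLeast0LessThan)
  have "(\<Sum>W\<leftarrow>Ws. vec_norm n (mat_apply W x) * vec_norm n (mat_apply W y))
      = (\<Sum>i<length Ws. \<bar>vec_norm n (mat_apply (Ws ! i) x)\<bar> * \<bar>vec_norm n (mat_apply (Ws ! i) y)\<bar>)"
    by (simp add: sum_list_sum_nth atLeast0LessThan)
  also have "\<dots> \<le> sqrt (\<beta> * (vec_norm n x)\<^sup>2) * sqrt (\<beta> * (vec_norm n y)\<^sup>2)"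
    using L2_set_mult_ineq[where f = "\<lambda>i. vec_norm n (mat_apply (Ws ! i) x)"
        and g = "\<lambda>i. vec_norm n (mat_apply (Ws ! i) y)" and A = "{..<length Ws}"]
    unfolding L2 .
  also have "\<dots> = sqrt ((\<beta> * vec_norm n x * vec_norm n y)\<^sup>2)"
    by (simp add: real_sqrt_mult[symmetric] power2_eq_square mult_ac)
  also have "\<dots> = \<bar>\<beta>\<bar> * vec_norm n x * vec_norm n y"
    by (simp add: abs_mult)
  finally show ?thesis .
qed

lemma trace_norm_kraus_map_le:
  assumes Ws: "\<forall>W \<in> set Ws. W \<in> carrier_mat n n"
    and \<beta>: "\<And>z. (\<Sum>W\<leftarrow>Ws. (vec_norm n (mat_apply W z))\<^sup>2) = \<beta> * (vec_norm n z)\<^sup>2"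
    and \<rho>: "\<rho> \<in> carrier_mat n n"
  shows "trace_norm n (kraus_map n Ws \<rho>) \<le> \<bar>\<beta>\<bar> * trace_norm n \<rho>"
proof -
  have cost: "trace_norm n (kraus_map n Ws \<rho>) \<le> \<bar>\<beta>\<bar> * dyads_cost n ps"
    if ps: "dyads n ps = \<rho>" for ps
  proof -
    let ?qs = "concat (map (\<lambda>W. map_dyads W ps) Ws)"
    have "trace_norm n (kraus_map n Ws \<rho>) \<le> dyads_cost n ?qs"
      using trace_norm_le_dyads_cost[of n ?qs] by (simp add: kraus_map_dyads[OF Ws] flip: ps)
    also have "\<dots> = (\<Sum>W\<leftarrow>Ws. \<Sum>(x, y)\<leftarrow>ps. vec_norm n (mat_apply W x) * vec_norm n (mat_apply W y))"
      by (induction Ws) (simp_all add: dyads_cost_def o_def split_def)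
    also have "\<dots> = (\<Sum>(x, y)\<leftarrow>ps. \<Sum>W\<leftarrow>Ws. vec_norm n (mat_apply W x) * vec_norm n (mat_apply W y))"
      by (induction ps) (simp_all add: sum_list_addf split_def)
    also have "\<dots> \<le> (\<Sum>(x, y)\<leftarrow>ps. \<bar>\<beta>\<bar> * vec_norm n x * vec_norm n y)"
      by (intro sum_list_mono) (auto intro: kraus_vec_norm_mult_le \<beta>)
    also have "\<dots> = \<bar>\<beta>\<bar> * dyads_cost n ps"
      by (simp add: dyads_cost_def sum_list_const_mult split_def mult.assoc)
    finally show ?thesis .
  qed
  show ?thesis
  proof (cases "\<beta> = 0")
    case True
    with cost dyads_columns[OF \<rho>] show ?thesis by auto
  next
    case False
    have "trace_norm n (kraus_map n Ws \<rho>) / \<bar>\<beta>\<bar> \<le> trace_norm n \<rho>"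
      using False cost by (intro trace_norm_greatest \<rho>) (simp add: divide_le_eq mult.commute)
    with False show ?thesis by (simp add: divide_le_eq mult.commute)
  qed
qed

lemma kraus_eigenvalue_norm_le:
  assumes Ws: "\<forall>W \<in> set Ws. W \<in> carrier_mat n n"
    and \<beta>: "\<And>z. (\<Sum>W\<leftarrow>Ws. (vec_norm n (mat_apply W z))\<^sup>2) = \<beta> * (vec_norm n z)\<^sup>2"
    and "superop_eigenvalue n (kraus_map n Ws) \<nu>"
  shows "cmod \<nu> \<le> \<bar>\<beta>\<bar>"
proof -
  obtain \<rho> where \<rho>: "\<rho> \<in> carrier_mat n n" "\<rho> \<noteq> 0\<^sub>m n n" "kraus_map n Ws \<rho> = \<nu> \<cdot>\<^sub>m \<rho>"
    using assms(3) unfolding superop_eigenvalue_def by blast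
  have "cmod \<nu> * trace_norm n \<rho> \<le> trace_norm n (kraus_map n Ws \<rho>)"
    using cmod_mult_trace_norm_le[OF \<rho>(1)] \<rho>(3) by simp
  also have "\<dots> \<le> \<bar>\<beta>\<bar> * trace_norm n \<rho>"
    by (rule trace_norm_kraus_map_le[OF Ws \<beta> \<rho>(1)])
  finally show ?thesis
    using trace_norm_pos[OF \<rho>(1,2)] by simp
qed

lemma mat_adjoint_smult_one: "mat_adjoint (c \<cdot>\<^sub>m 1\<^sub>m n) = cnj c \<cdot>\<^sub>m 1\<^sub>m n"
  by (rule eq_matI) auto

lemma sandwich_smult_one:
  assumes "\<rho> \<in> carrier_mat n n"
  shows "(c \<cdot>\<^sub>m 1\<^sub>m n) * \<rho> * mat_adjoint (c \<cdot>\<^sub>m 1\<^sub>m n) = (c * cnj c) \<cdot>\<^sub>m \<rho>"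
proof -
  have "(c \<cdot>\<^sub>m 1\<^sub>m n) * \<rho> = c \<cdot>\<^sub>m \<rho>"
    using assms by (simp add: mult_smult_assoc_mat[OF one_carrier_mat assms])
  moreover have "(c \<cdot>\<^sub>m \<rho>) * (cnj c \<cdot>\<^sub>m 1\<^sub>m n) = cnj c \<cdot>\<^sub>m (c \<cdot>\<^sub>m \<rho>)"
    using assms by (simp add: mult_smult_distrib[OF smult_carrier_mat[OF assms] one_carrier_mat])
  ultimately show ?thesis
    using assms by (auto simp: mat_adjoint_smult_one intro!: eq_matI)
qed

lemma vec_norm_mat_apply_smult_one: "vec_norm n (mat_apply (c \<cdot>\<^sub>m 1\<^sub>m n) x) = cmod c * vec_norm n x"
proof -
  have "mat_apply (c \<cdot>\<^sub>m 1\<^sub>m n) x a = c * x a" if "a < n" for a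
  proof -
    have "mat_apply (c \<cdot>\<^sub>m 1\<^sub>m n) x a = (\<Sum>j<n. if j = a then c * x j else 0)"
      using that unfolding mat_apply_def by (intro sum.cong) auto
    then show ?thesis using that by simp
  qed
  then show ?thesis
    unfolding vec_norm_def L2_set_right_distrib[OF norm_ge_zero]
    by (intro L2_set_cong) (simp_all add: norm_mult)
qed

lemma superop_eigenvalue_kraus_map_Cons_smult_one:
  assumes Ws: "\<forall>W \<in> set Ws. W \<in> carrier_mat n n"
    and "superop_eigenvalue n (kraus_map n ((c \<cdot>\<^sub>m 1\<^sub>m n) # Ws)) \<mu>"
  shows "superop_eigenvalue n (kraus_map n Ws) (\<mu> - c * cnj c)"
proof -
  obtain \<rho> where \<rho>: "\<rho> \<in> carrier_mat n n" "\<rho> \<noteq> 0\<^sub>m n n"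
    and eig: "kraus_map n ((c \<cdot>\<^sub>m 1\<^sub>m n) # Ws) \<rho> = \<mu> \<cdot>\<^sub>m \<rho>"
    using assms(2) unfolding superop_eigenvalue_def by blast
  have K: "kraus_map n Ws \<rho> \<in> carrier_mat n n"
    by (rule kraus_map_carrier[OF Ws \<rho>(1)])
  have split: "\<mu> \<cdot>\<^sub>m \<rho> = (c * cnj c) \<cdot>\<^sub>m \<rho> + kraus_map n Ws \<rho>"
    by (simp add: kraus_map_def sandwich_smult_one[OF \<rho>(1)] flip: eig)
  have "kraus_map n Ws \<rho> = (\<mu> - c * cnj c) \<cdot>\<^sub>m \<rho>"
  proof (rule eq_matI)
    fix i j assume "i < dim_row ((\<mu> - c * cnj c) \<cdot>\<^sub>m \<rho>)" "j < dim_col ((\<mu> - c * cnj c) \<cdot>\<^sub>m \<rho>)"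
    then have ij: "i < n" "j < n" using \<rho>(1) by auto
    have "(\<mu> \<cdot>\<^sub>m \<rho>) $$ (i, j) = ((c * cnj c) \<cdot>\<^sub>m \<rho> + kraus_map n Ws \<rho>) $$ (i, j)"
      by (simp only: split)
    then show "kraus_map n Ws \<rho> $$ (i, j) = ((\<mu> - c * cnj c) \<cdot>\<^sub>m \<rho>) $$ (i, j)"
      using ij \<rho>(1) K by (simp add: algebra_simps)
  qed (use \<rho>(1) K in auto)
  with \<rho> show ?thesis
    unfolding superop_eigenvalue_def by blast
qed

lemma eq_1_if_norm_diff_le:
  fixes \<mu> :: complex
  assumes "cmod \<mu> = 1" "\<alpha> > 0" "cmod (\<mu> - of_real \<alpha>) \<le> \<bar>1 - \<alpha>\<bar>"
  shows "\<mu> = 1"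
proof -
  have unit: "(Re \<mu>)\<^sup>2 + (Im \<mu>)\<^sup>2 = 1"
    using cmod_power2[of \<mu>] assms(1) by simp
  have "(Re \<mu> - \<alpha>)\<^sup>2 + (Im \<mu>)\<^sup>2 \<le> (1 - \<alpha>)\<^sup>2"
    using power_mono[OF assms(3) norm_ge_zero, of 2] cmod_power2[of "\<mu> - of_real \<alpha>"] by simp
  then have "\<alpha> * 1 \<le> \<alpha> * Re \<mu>"
    using unit by (simp add: power2_diff algebra_simps)
  then have "Re \<mu> \<ge> 1"
    using assms(2) by (simp only: mult_le_cancel_left_pos)
  moreover have "Re \<mu> \<le> 1"
    using abs_Re_le_cmod[of \<mu>] assms(1) by simp
  ultimately have "Re \<mu> = 1" by simp
  with unit show ?thesis by (simp add: complex_eq_iff)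
qed

theorem lemma2:
  fixes n :: nat and Vs :: "complex mat list" and \<alpha> :: real and \<mu> :: complex
  assumes "\<forall>V \<in> set Vs. V \<in> carrier_mat n n"
    and "Vs \<noteq> []"
    and "\<alpha> > 0"
    and "hd Vs = complex_of_real (sqrt \<alpha>) \<cdot>\<^sub>m 1\<^sub>m n"
    and "trace_preserving n (kraus_map n Vs)"
    and "superop_eigenvalue n (kraus_map n Vs) \<mu>"
    and "cmod \<mu> = 1"
  shows "\<mu> = 1"
proof -
  define c where "c = complex_of_real (sqrt \<alpha>)"
  obtain Ws where Vs: "Vs = (c \<cdot>\<^sub>m 1\<^sub>m n) # Ws"
    using assms(2,4) unfolding c_def by (metis list.collapse)
  have Ws: "\<forall>W \<in> set Ws. W \<in> carrier_mat n n"
    using assms(1) Vs by simp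
  have c: "c * cnj c = of_real \<alpha>" "cmod c ^ 2 = \<alpha>"
    using assms(3) by (simp_all add: c_def flip: of_real_mult)
  have \<beta>: "(\<Sum>W\<leftarrow>Ws. (vec_norm n (mat_apply W z))\<^sup>2) = (1 - \<alpha>) * (vec_norm n z)\<^sup>2" for z
    using kraus_sum_vec_norm_power2[OF assms(1,5), of z]
    by (simp add: Vs vec_norm_mat_apply_smult_one power_mult_distrib c algebra_simps)
  have "superop_eigenvalue n (kraus_map n Ws) (\<mu> - of_real \<alpha>)"
    using superop_eigenvalue_kraus_map_Cons_smult_one[OF Ws, of c \<mu>] assms(6) by (simp add: Vs c)
  then have "cmod (\<mu> - of_real \<alpha>) \<le> \<bar>1 - \<alpha>\<bar>"
    by (rule kraus_eigenvalue_norm_le[OF Ws \<beta>])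
  with assms(7,3) show ?thesis
    by (rule eq_1_if_norm_diff_le)
qed

end
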